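(* Let $\Theta=(\alpha,\rho_r,\rho_d,\rho_s,\rho_0,T)$ with $\alpha>1$, $\rho_r,\rho_d,\rho_s,\rho_0>0$, $T>1$, and $K_{max}(\Theta):=\min\big(\frac T4,\frac{\rho_r}{3\rho_0},\frac{3\rho_d}{2\rho_0}\big)>10$. Let $0<R_1<R_2<R_{max}(\Theta)$ be such that $\rho_r<\frac{\alpha}{(1+\rho_d/\rho_r)^2}\frac{g^2(R_i)}{R_i}$ for $i=1,2$. Then $\zeta'_{csi}(R_1,\Theta)<\zeta'_{csi}(R_2,\Theta)$.
   Context: $g(x)=\sqrt{\frac{x}{2^x-1}}\big(2^x x\ln2-2^x+1\big)$, $x>0$. $R_{max}(\Theta)=c(\Theta)K_{max}(\Theta)$ where $c(\Theta)>0$ is the unique positive solution of $g(c)/\sqrt c=(1+\rho_d/\rho_r)\sqrt{K_{max}(\Theta)\rho_r/\alpha}$. For $R>0$ and real $M>K\ge1$, $\frac{1}{\zeta_{csi}(M,K,R,\Theta)}=\frac1R\big[\frac{\alpha K}{M-K}(2^{R/K}-1)+M\rho_r+K\rho_d+\rho_s\big]$, and $\zeta'_{csi}(R,\Theta)$ is the maximum of $\zeta_{csi}(M,K,R,\Theta)$ over real $(M,K)$ with $1\le K\le K_{max}(\Theta)$, $M>K$. *)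

theory Defs
  imports Complex_Main
begin

definition g :: "real \<Rightarrow> real" where
  "g x = sqrt (x / (2 powr x - 1)) * (2 powr x * x * ln 2 - 2 powr x + 1)"

definition Kmax :: "real \<Rightarrow> real \<Rightarrow> real \<Rightarrow> real \<Rightarrow> real" where
  "Kmax rho_r rho_d rho_0 T = min (T / 4) (min (rho_r / (3 * rho_0)) (3 * rho_d / (2 * rho_0)))"

definition cTheta :: "real \<Rightarrow> real \<Rightarrow> real \<Rightarrow> real \<Rightarrow> real \<Rightarrow> real" where
  "cTheta alpha rho_r rho_d rho_0 T =
     (THE c. c > 0 \<and> g c / sqrt c =
        (1 + rho_d / rho_r) * sqrt (Kmax rho_r rho_d rho_0 T * rho_r / alpha))"

definition Rmax :: "real \<Rightarrow> real \<Rightarrow> real \<Rightarrow> real \<Rightarrow> real \<Rightarrow> real" where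
  "Rmax alpha rho_r rho_d rho_0 T =
     cTheta alpha rho_r rho_d rho_0 T * Kmax rho_r rho_d rho_0 T"

definition zeta_csi :: "real \<Rightarrow> real \<Rightarrow> real \<Rightarrow> real \<Rightarrow> real \<Rightarrow> real \<Rightarrow> real \<Rightarrow> real" where
  "zeta_csi M K R alpha rho_r rho_d rho_s =
     1 / ((1 / R) * (alpha * K / (M - K) * (2 powr (R / K) - 1) + M * rho_r + K * rho_d + rho_s))"

definition zeta'_csi :: "real \<Rightarrow> real \<Rightarrow> real \<Rightarrow> real \<Rightarrow> real \<Rightarrow> real \<Rightarrow> real \<Rightarrow> real" where
  "zeta'_csi R alpha rho_r rho_d rho_s rho_0 T =
     (SUP MK \<in> {(M, K). 1 \<le> K \<and> K \<le> Kmax rho_r rho_d rho_0 T \<and> M > K}.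
        zeta_csi (fst MK) (snd MK) R alpha rho_r rho_d rho_s)"

end

theory Submission
  imports Defs "HOL-Real_Asymp.Real_Asymp"
begin

text \<open>
  Optimising over \<open>M\<close> by AM-GM reduces \<open>\<zeta>'\<^sub>c\<^sub>s\<^sub>i(R)\<close> to the maximum over
  \<open>K \<in> [1, K\<^sub>m\<^sub>a\<^sub>x]\<close> of \<open>H(K, R) = R / (2 \<surd>(\<alpha> \<rho>\<^sub>r K (2\<^bsup>R/K\<^esup> - 1)) + K (\<rho>\<^sub>r + \<rho>\<^sub>d) + \<rho>\<^sub>s)\<close>.
  If \<open>K\<^sub>1\<close> is a maximiser for \<open>R\<^sub>1\<close> and \<open>t = R\<^sub>2 / R\<^sub>1\<close>, then scaling both arguments by \<open>t\<close>
  strictly increases \<open>H\<close>; if \<open>t K\<^sub>1\<close> leaves the admissible range, scale only up to \<open>K\<^sub>m\<^sub>a\<^sub>x\<close>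
  and then use that \<open>H(K\<^sub>m\<^sub>a\<^sub>x, \<cdot>)\<close> is strictly increasing on \<open>(0, R\<^sub>m\<^sub>a\<^sub>x)\<close>. The latter is where
  \<open>c(\<Theta>)\<close> enters: with \<open>\<psi>(u) = ((u - 1) e\<^sup>u + 1) / \<surd>(e\<^sup>u - 1)\<close>, so that \<open>g(x)/\<surd>x = \<psi>(x ln 2)\<close>,
  the derivative of \<open>H(K, \<cdot>)\<close> is positive as long as \<open>\<psi>(R ln 2 / K)\<close> stays below
  \<open>\<psi>(c(\<Theta>) ln 2)\<close>, and \<open>\<psi>\<close> is strictly increasing.
\<close>

definition psi :: "real \<Rightarrow> real" where
  "psi u = ((u - 1) * exp u + 1) / sqrt (exp u - 1)"

lemma has_real_derivative_psi:
  assumes "u > 0"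
  shows "(psi has_real_derivative
           exp u * ((u + 1) * exp u - 2 * u - 1) / (2 * (exp u - 1) * sqrt (exp u - 1))) (at u)"
proof -
  have e: "exp u > 1" using assms by simp
  then have s: "sqrt (exp u - 1) > 0" by simp
  have num: "((\<lambda>u. (u - 1) * exp u + 1) has_real_derivative u * exp u) (at u)"
    by (auto intro!: derivative_eq_intros simp: algebra_simps)
  have den: "((\<lambda>u. sqrt (exp u - 1)) has_real_derivative exp u / (2 * sqrt (exp u - 1))) (at u)"
    using e by (auto intro!: derivative_eq_intros simp: field_simps)
  have "(u * exp u * sqrt (exp u - 1) - ((u - 1) * exp u + 1) * (exp u / (2 * sqrt (exp u - 1))))
        / (sqrt (exp u - 1) * sqrt (exp u - 1))
      = exp u * ((u + 1) * exp u - 2 * u - 1) / (2 * (exp u - 1) * sqrt (exp u - 1))"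
    using e s by (simp add: field_simps)
  then show ?thesis
    unfolding psi_def[abs_def] using DERIV_divide[OF num den] s by simp
qed

lemma psi_strict_mono_on: "strict_mono_on {0<..} psi"
proof (rule strict_mono_onI)
  fix a b :: real
  assume "a \<in> {0<..}" "a < b"
  then have "a > 0" by simp
  show "psi a < psi b"
  proof (rule DERIV_pos_imp_increasing[OF \<open>a < b\<close>])
    fix u assume "a \<le> u"
    with \<open>a > 0\<close> have u: "u > 0" by simp
    have "(u + 1) * (u + 1) \<le> (u + 1) * exp u"
      using u exp_ge_add_one_self[of u] by (intro mult_left_mono) (auto simp: add.commute)
    then have "(u + 1) * exp u - 2 * u - 1 > 0"
      using u by (simp add: algebra_simps) (smt (verit) mult_pos_pos)
    then have "exp u * ((u + 1) * exp u - 2 * u - 1) / (2 * (exp u - 1) * sqrt (exp u - 1)) > 0"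
      using u by (intro divide_pos_pos mult_pos_pos) auto
    then show "\<exists>y. (psi has_real_derivative y) (at u) \<and> y > 0"
      using has_real_derivative_psi[OF u] by blast
  qed
qed

lemma psi_surj:
  assumes "tau > 0"
  obtains u where "u > 0" "psi u = tau"
proof -
  have "(psi \<longlongrightarrow> 0) (at_right 0)"
    unfolding psi_def by real_asymp
  then have "eventually (\<lambda>u. psi u < tau \<and> u > 0) (at_right 0)"
    using assms by (intro eventually_conj order_tendstoD(2) eventually_at_right_less)
  then obtain a where a: "psi a < tau" "a > 0"
    using eventually_happens' by force
  have "filterlim psi at_top at_top"
    unfolding psi_def by real_asymp
  then have "eventually (\<lambda>u. psi u > tau \<and> u \<ge> a) at_top"
    by (intro eventually_conj eventually_ge_at_top) (simp add: filterlim_at_top_dense)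
  then obtain b where b: "psi b > tau" "b \<ge> a"
    using eventually_happens' by force
  have "continuous_on {a..b} psi"
    using a by (intro continuous_at_imp_continuous_on ballI
                      DERIV_isCont[OF has_real_derivative_psi]) auto
  then obtain u where "a \<le> u" "psi u = tau"
    using IVT'[of psi a tau b] a b by auto
  then show thesis using that[of u] a by simp
qed

lemma g_div_sqrt_eq_psi:
  assumes "x > 0"
  shows "g x / sqrt x = psi (x * ln 2)"
proof -
  have p: "2 powr x = exp (x * ln 2)" by (simp add: powr_def)
  have "g x = sqrt x / sqrt (exp (x * ln 2) - 1) * (exp (x * ln 2) * x * ln 2 - exp (x * ln 2) + 1)"
    unfolding g_def p by (simp add: real_sqrt_divide)
  then have "g x / sqrt x = (exp (x * ln 2) * x * ln 2 - exp (x * ln 2) + 1) / sqrt (exp (x * ln 2) - 1)"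
    using assms by simp
  then show ?thesis by (simp add: psi_def algebra_simps)
qed

lemma g_div_sqrt_eq_unique:
  assumes "tau > 0"
  shows "\<exists>!c. c > 0 \<and> g c / sqrt c = tau"
proof -
  have L: "ln (2::real) > 0" by simp
  obtain u where u: "u > 0" "psi u = tau" using psi_surj[OF assms] .
  show ?thesis
  proof (rule ex1I[of _ "u / ln 2"])
    show "u / ln 2 > 0 \<and> g (u / ln 2) / sqrt (u / ln 2) = tau"
      using u L by (simp add: g_div_sqrt_eq_psi)
  next
    fix c assume "c > 0 \<and> g c / sqrt c = tau"
    then have "c * ln 2 > 0" "psi (c * ln 2) = psi u"
      using u L g_div_sqrt_eq_psi[of c] by simp_all
    then have "c * ln 2 = u"
      using strict_mono_on_eqD[OF psi_strict_mono_on] u by simp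
    then show "c = u / ln 2" using L by (simp add: field_simps)
  qed
qed

lemma cTheta_pos_psi:
  assumes "alpha > 0" "rho_r > 0" "rho_d > 0" "Kmax rho_r rho_d rho_0 T > 0"
  shows "cTheta alpha rho_r rho_d rho_0 T > 0"
    and "psi (cTheta alpha rho_r rho_d rho_0 T * ln 2)
           = (1 + rho_d / rho_r) * sqrt (Kmax rho_r rho_d rho_0 T * rho_r / alpha)"
proof -
  let ?c = "cTheta alpha rho_r rho_d rho_0 T"
  let ?tau = "(1 + rho_d / rho_r) * sqrt (Kmax rho_r rho_d rho_0 T * rho_r / alpha)"
  have "?tau > 0" using assms by (simp add: add_pos_pos)
  from theI'[OF g_div_sqrt_eq_unique[OF this]]
  have c: "?c > 0" and "g ?c / sqrt ?c = ?tau"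
    unfolding cTheta_def by blast+
  then show "?c > 0" and "psi (?c * ln 2) = ?tau"
    using g_div_sqrt_eq_psi[OF c] by simp_all
qed

definition zeta_opt :: "real \<Rightarrow> real \<Rightarrow> real \<Rightarrow> real \<Rightarrow> real \<Rightarrow> real \<Rightarrow> real" where
  "zeta_opt K R alpha rho_r rho_d rho_s =
     R / (2 * sqrt (alpha * rho_r * K * (2 powr (R / K) - 1)) + K * (rho_r + rho_d) + rho_s)"

lemma zeta_csi_le_zeta_opt:
  assumes "alpha > 0" "rho_r > 0" "rho_d > 0" "rho_s > 0" "K > 0" "M > K" "R > 0"
  shows "zeta_csi M K R alpha rho_r rho_d rho_s \<le> zeta_opt K R alpha rho_r rho_d rho_s"
proof -
  define E where "E = 2 powr (R / K) - 1"
  have E: "E \<ge> 0" unfolding E_def using assms by (simp add: ge_one_powr_ge_zero)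
  define x where "x = alpha * K * E / (M - K)"
  define y where "y = rho_r * (M - K)"
  have "x \<ge> 0" "y \<ge> 0" using E assms by (simp_all add: x_def y_def)
  then have "sqrt (x * y) \<le> (x + y) / 2" by (rule arith_geo_mean_sqrt)
  moreover have "x * y = alpha * rho_r * K * E" using assms by (simp add: x_def y_def)
  ultimately have amgm: "2 * sqrt (alpha * rho_r * K * E) \<le> x + y" by simp
  have "0 < 2 * sqrt (alpha * rho_r * K * E) + K * (rho_r + rho_d) + rho_s"
    using E assms by (intro add_nonneg_pos add_pos_pos) auto
  then have "R / (x + y + K * (rho_r + rho_d) + rho_s)
             \<le> R / (2 * sqrt (alpha * rho_r * K * E) + K * (rho_r + rho_d) + rho_s)"
    using amgm assms by (intro divide_left_mono) auto
  moreover have "alpha * K / (M - K) * E + M * rho_r + K * rho_d + rho_s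
                 = x + y + K * (rho_r + rho_d) + rho_s"
    by (simp add: x_def y_def algebra_simps)
  ultimately show ?thesis
    using assms by (simp add: zeta_csi_def zeta_opt_def E_def)
qed

lemma zeta_csi_eq_zeta_opt:
  assumes "alpha > 0" "rho_r > 0" "rho_d > 0" "rho_s > 0" "K > 0" "R > 0"
  obtains M where "M > K" "zeta_csi M K R alpha rho_r rho_d rho_s = zeta_opt K R alpha rho_r rho_d rho_s"
proof
  define E where "E = 2 powr (R / K) - 1"
  have "E > 0" unfolding E_def using assms by (simp add: gr_one_powr)
  define u where "u = sqrt (alpha * K * E / rho_r)"
  have u: "u > 0" using \<open>E > 0\<close> assms by (simp add: u_def)
  have u2: "rho_r * u * u = alpha * K * E"
    using \<open>E > 0\<close> assms by (simp add: u_def mult.assoc)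
  have "sqrt (alpha * rho_r * K * E) = sqrt ((rho_r * u) ^ 2)"
    using u2 by (simp add: power2_eq_square algebra_simps)
  also have "\<dots> = rho_r * u" using assms u by simp
  finally have su: "sqrt (alpha * rho_r * K * E) = rho_r * u" .
  have "alpha * K / u * E = rho_r * u"
    using u u2 by (simp add: field_simps)
  then have "alpha * K / (K + u - K) * E + (K + u) * rho_r + K * rho_d + rho_s
             = 2 * sqrt (alpha * rho_r * K * E) + K * (rho_r + rho_d) + rho_s"
    unfolding su by (simp add: algebra_simps)
  then show "zeta_csi (K + u) K R alpha rho_r rho_d rho_s = zeta_opt K R alpha rho_r rho_d rho_s"
    using assms by (simp add: zeta_csi_def zeta_opt_def E_def)
  show "K + u > K" using u by simp
qed

lemma zeta_opt_denominator_pos: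
  assumes "alpha > 0" "rho_r > 0" "rho_d > 0" "rho_s > 0" "K > 0" "R \<ge> 0"
  shows "2 * sqrt (alpha * rho_r * K * (2 powr (R / K) - 1)) + K * (rho_r + rho_d) + rho_s > 0"
proof -
  have "2 powr (R / K) \<ge> 1" using assms by (simp add: ge_one_powr_ge_zero)
  then show ?thesis using assms by (intro add_nonneg_pos add_pos_pos) auto
qed

lemma continuous_on_zeta_opt:
  assumes "alpha > 0" "rho_r > 0" "rho_d > 0" "rho_s > 0" "R \<ge> 0"
  shows "continuous_on {0<..} (\<lambda>K. zeta_opt K R alpha rho_r rho_d rho_s)"
  unfolding zeta_opt_def using zeta_opt_denominator_pos[OF assms(1-4) _ assms(5)]
  by (intro continuous_intros) (auto simp: less_imp_neq[symmetric])

lemma zeta'_csi_attained: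
  assumes "alpha > 0" "rho_r > 0" "rho_d > 0" "rho_s > 0" "R > 0"
    and "Kmax rho_r rho_d rho_0 T \<ge> 1"
  obtains K0 where "1 \<le> K0" "K0 \<le> Kmax rho_r rho_d rho_0 T"
    and "zeta'_csi R alpha rho_r rho_d rho_s rho_0 T = zeta_opt K0 R alpha rho_r rho_d rho_s"
    and "\<And>K. 1 \<le> K \<Longrightarrow> K \<le> Kmax rho_r rho_d rho_0 T \<Longrightarrow>
           zeta_opt K R alpha rho_r rho_d rho_s \<le> zeta_opt K0 R alpha rho_r rho_d rho_s"
proof -
  let ?Km = "Kmax rho_r rho_d rho_0 T"
  let ?S = "{(M, K). 1 \<le> K \<and> K \<le> ?Km \<and> M > K}"
  let ?z = "\<lambda>MK. zeta_csi (fst MK) (snd MK) R alpha rho_r rho_d rho_s"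
  let ?H = "\<lambda>K. zeta_opt K R alpha rho_r rho_d rho_s"
  have "continuous_on {1..?Km} ?H"
    using continuous_on_zeta_opt[OF assms(1-4) less_imp_le[OF assms(5)]]
    by (rule continuous_on_subset) auto
  then obtain K0 where K0: "K0 \<in> {1..?Km}" and max: "\<And>K. K \<in> {1..?Km} \<Longrightarrow> ?H K \<le> ?H K0"
    using continuous_attains_sup[OF compact_Icc] assms(6) by (metis atLeastAtMost_iff empty_iff order_refl)
  obtain M0 where "M0 > K0" "zeta_csi M0 K0 R alpha rho_r rho_d rho_s = ?H K0"
    using zeta_csi_eq_zeta_opt[OF assms(1-4), of K0 R] K0 assms(5) by auto
  then have "?H K0 \<in> ?z ` ?S"
    using K0 by (intro image_eqI[of _ _ "(M0, K0)"]) auto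
  moreover have "?z MK \<le> ?H K0" if "MK \<in> ?S" for MK
    using that zeta_csi_le_zeta_opt[OF assms(1-4), of "snd MK" "fst MK" R] assms(5) max
    by (force intro: order_trans)
  ultimately have "zeta'_csi R alpha rho_r rho_d rho_s rho_0 T = ?H K0"
    unfolding zeta'_csi_def by (intro cSup_eq_maximum) auto
  with K0 max that show thesis by auto
qed

lemma zeta_opt_scale:
  assumes "alpha > 0" "rho_r > 0" "rho_d > 0" "rho_s > 0" "K > 0" "R > 0" "s \<ge> 1"
  shows "zeta_opt K R alpha rho_r rho_d rho_s \<le> zeta_opt (s * K) (s * R) alpha rho_r rho_d rho_s"
    and "s > 1 \<Longrightarrow>
           zeta_opt K R alpha rho_r rho_d rho_s < zeta_opt (s * K) (s * R) alpha rho_r rho_d rho_s"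
proof -
  define X where "X = sqrt (alpha * rho_r * K * (2 powr (R / K) - 1))"
  have X: "X \<ge> 0" using assms by (simp add: X_def ge_one_powr_ge_zero)
  define D where "D = 2 * X + K * (rho_r + rho_d) + rho_s"
  define D' where "D' = 2 * (sqrt s * X) + s * K * (rho_r + rho_d) + rho_s"
  have D: "D > 0" using zeta_opt_denominator_pos[OF assms(1-5), of R] assms by (simp add: D_def X_def)
  have "D' > 0" using X assms by (simp add: D'_def add_nonneg_pos add_pos_pos)
  have H: "zeta_opt K R alpha rho_r rho_d rho_s = s * R / (s * D)"
    using assms by (simp add: zeta_opt_def D_def X_def)
  have H': "zeta_opt (s * K) (s * R) alpha rho_r rho_d rho_s = s * R / D'"
    using assms by (simp add: zeta_opt_def D'_def X_def real_sqrt_mult[symmetric] ac_simps)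
  have "sqrt s * X \<le> s * X"
    using X assms by (intro mult_right_mono real_le_lsqrt self_le_power) auto
  then have "s * D - D' \<ge> (s - 1) * rho_s"
    by (simp add: D_def D'_def algebra_simps)
  moreover have "(s - 1) * rho_s \<ge> 0" and "s > 1 \<Longrightarrow> (s - 1) * rho_s > 0"
    using assms by simp_all
  ultimately have le: "D' \<le> s * D" and less: "s > 1 \<Longrightarrow> D' < s * D"
    by linarith+
  show "zeta_opt K R alpha rho_r rho_d rho_s \<le> zeta_opt (s * K) (s * R) alpha rho_r rho_d rho_s"
    unfolding H H' by (rule frac_le) (use le \<open>D' > 0\<close> assms in auto)
  show "zeta_opt K R alpha rho_r rho_d rho_s < zeta_opt (s * K) (s * R) alpha rho_r rho_d rho_s"
    if "s > 1"
    unfolding H H' by (rule frac_less2) (use less[OF that] \<open>D' > 0\<close> assms in auto)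
qed

lemma mult_exp_less_of_psi_le:
  assumes "A > 0" "b > 0" "x > 0" "psi x \<le> 2 * b / A"
  shows "x * A * exp x < 2 * sqrt (exp x - 1) * (A * sqrt (exp x - 1) + b)"
proof -
  define r where "r = sqrt (exp x - 1)"
  have r: "r > 0" "r * r = exp x - 1" using assms by (simp_all add: r_def)
  have "A * psi x \<le> 2 * b" using assms by (simp add: le_divide_eq mult.commute)
  have "A * ((x - 1) * exp x + 1) = A * psi x * r"
    using r by (simp add: psi_def r_def)
  also have "\<dots> \<le> 2 * b * r"
    using \<open>A * psi x \<le> 2 * b\<close> r by (intro mult_right_mono) auto
  finally have num: "A * ((x - 1) * exp x + 1) \<le> 2 * b * r" .
  have "x * A * exp x = A * ((x - 1) * exp x + 1) + A * (r * r)"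
    by (simp add: r(2) algebra_simps)
  also have "\<dots> \<le> 2 * b * r + A * (r * r)"
    using num by simp
  also have "\<dots> < 2 * r * (A * r + b)"
    using assms r by (simp add: algebra_simps)
  finally show ?thesis by (simp add: r_def)
qed

lemma quotient_sqrt_exp_less:
  assumes "A > 0" "b > 0" "0 < u" "u < v" "psi v \<le> 2 * b / A"
  shows "u / (A * sqrt (exp u - 1) + b) < v / (A * sqrt (exp v - 1) + b)"
proof (rule DERIV_pos_imp_increasing[OF \<open>u < v\<close>])
  fix x assume "u \<le> x" "x \<le> v"
  then have x: "x > 0" using assms by simp
  have "psi x \<le> psi v"
    using \<open>x \<le> v\<close> x strict_mono_on_imp_mono_on[OF psi_strict_mono_on]
    by (auto intro: mono_onD)
  with assms x have key: "x * A * exp x < 2 * sqrt (exp x - 1) * (A * sqrt (exp x - 1) + b)"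
    by (intro mult_exp_less_of_psi_le) auto
  define den where "den = A * sqrt (exp x - 1) + b"
  have r: "sqrt (exp x - 1) > 0" using x by simp
  then have den: "den > 0" using assms by (simp add: den_def add_pos_pos)
  have "((\<lambda>x. A * sqrt (exp x - 1) + b) has_real_derivative
          A * (exp x / (2 * sqrt (exp x - 1)))) (at x)"
    using x by (auto intro!: derivative_eq_intros simp: field_simps)
  from DERIV_divide[OF DERIV_ident this] den
  have "((\<lambda>x. x / (A * sqrt (exp x - 1) + b)) has_real_derivative
          (den - x * (A * (exp x / (2 * sqrt (exp x - 1))))) / (den * den)) (at x)"
    by (simp add: den_def)
  moreover have "x * (A * (exp x / (2 * sqrt (exp x - 1)))) < den"
    using key r by (simp add: den_def divide_less_eq mult.commute mult.left_commute)
  ultimately show "\<exists>y. ((\<lambda>x. x / (A * sqrt (exp x - 1) + b)) has_real_derivative y) (at x) \<and> y > 0"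
    using den by force
qed

lemma zeta_opt_strict_mono:
  assumes "alpha > 0" "rho_r > 0" "rho_d > 0" "rho_s > 0" "K > 0" "0 < R1" "R1 < R2"
    and "psi (R2 * ln 2 / K) \<le> (1 + rho_d / rho_r) * sqrt (K * rho_r / alpha)"
  shows "zeta_opt K R1 alpha rho_r rho_d rho_s < zeta_opt K R2 alpha rho_r rho_d rho_s"
proof -
  define L where "L = ln (2::real)"
  have L: "L > 0" by (simp add: L_def)
  define A where "A = 2 * sqrt (alpha * rho_r * K)"
  define b where "b = K * (rho_r + rho_d) + rho_s"
  have A: "A > 0" using assms by (simp add: A_def)
  have b: "b > 0" using assms by (simp add: b_def add_pos_pos)
  have H: "zeta_opt K R alpha rho_r rho_d rho_s
           = K / L * ((R * L / K) / (A * sqrt (exp (R * L / K) - 1) + b))" for R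
    using assms L
    by (simp add: zeta_opt_def powr_def A_def b_def L_def real_sqrt_mult mult.commute)
  have "sqrt (alpha * rho_r * K) * sqrt (K * rho_r / alpha) = sqrt ((K * rho_r)\<^sup>2)"
    using assms by (simp add: real_sqrt_mult[symmetric] power2_eq_square field_simps)
  then have "A * sqrt (K * rho_r / alpha) = 2 * K * rho_r"
    using assms by (simp add: A_def)
  then have "(1 + rho_d / rho_r) * sqrt (K * rho_r / alpha) = (1 + rho_d / rho_r) * (2 * K * rho_r) / A"
    using A by (simp add: field_simps)
  also have "\<dots> = 2 * K * (rho_r + rho_d) / A"
    using assms A by (simp add: field_simps)
  also have "\<dots> \<le> 2 * b / A"
    using assms A by (simp add: b_def divide_right_mono)
  finally have "psi (R2 * L / K) \<le> 2 * b / A"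
    using assms(8) by (simp add: L_def)
  then have "(R1 * L / K) / (A * sqrt (exp (R1 * L / K) - 1) + b)
             < (R2 * L / K) / (A * sqrt (exp (R2 * L / K) - 1) + b)"
    using assms A b L by (intro quotient_sqrt_exp_less) (auto simp: divide_strict_right_mono)
  then show ?thesis
    unfolding H using assms L by (intro mult_strict_left_mono) auto
qed

lemma exists_zeta_opt_gt:
  assumes "alpha > 0" "rho_r > 0" "rho_d > 0" "rho_s > 0" "1 \<le> K1" "K1 \<le> Km"
    and "0 < R1" "R1 < R2"
    and "psi (R2 * ln 2 / Km) \<le> (1 + rho_d / rho_r) * sqrt (Km * rho_r / alpha)"
  obtains K2 where "1 \<le> K2" "K2 \<le> Km"
    and "zeta_opt K1 R1 alpha rho_r rho_d rho_s < zeta_opt K2 R2 alpha rho_r rho_d rho_s"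
proof (cases "R2 / R1 * K1 \<le> Km")
  case True
  define t where "t = R2 / R1"
  have "t > 1" "t * R1 = R2"
    using assms by (auto simp: t_def field_simps)
  moreover have "1 \<le> t * K1"
    using mult_mono[of 1 t 1 K1] \<open>t > 1\<close> assms(5) by simp
  moreover have "zeta_opt K1 R1 alpha rho_r rho_d rho_s
                 < zeta_opt (t * K1) (t * R1) alpha rho_r rho_d rho_s"
    using calculation assms by (intro zeta_opt_scale(2)) auto
  ultimately show thesis
    using that True by (auto simp: t_def)
next
  case False
  define s where "s = Km / K1"
  have "s \<ge> 1" "s * K1 = Km" "s * R1 < R2"
    using False assms by (auto simp: s_def field_simps)
  then have "zeta_opt K1 R1 alpha rho_r rho_d rho_s \<le> zeta_opt Km (s * R1) alpha rho_r rho_d rho_s"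
    using zeta_opt_scale(1)[OF assms(1-4), of K1 R1 s] assms by simp
  also have "\<dots> < zeta_opt Km R2 alpha rho_r rho_d rho_s"
    using \<open>s \<ge> 1\<close> \<open>s * R1 < R2\<close> assms by (intro zeta_opt_strict_mono) auto
  finally show thesis
    using assms by (intro that[of Km]) auto
qed

theorem lemma6:
  fixes alpha rho_r rho_d rho_s rho_0 T R1 R2 :: real
  assumes "alpha > 1" and "rho_r > 0" and "rho_d > 0" and "rho_s > 0" and "rho_0 > 0"
    and "T > 1"
    and "Kmax rho_r rho_d rho_0 T > 10"
    and "0 < R1" and "R1 < R2" and "R2 < Rmax alpha rho_r rho_d rho_0 T"
    and "rho_r < alpha / (1 + rho_d / rho_r)^2 * (g R1)^2 / R1"
    and "rho_r < alpha / (1 + rho_d / rho_r)^2 * (g R2)^2 / R2"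
  shows "zeta'_csi R1 alpha rho_r rho_d rho_s rho_0 T < zeta'_csi R2 alpha rho_r rho_d rho_s rho_0 T"
proof -
  define Km where "Km = Kmax rho_r rho_d rho_0 T"
  define c where "c = cTheta alpha rho_r rho_d rho_0 T"
  have pos: "alpha > 0" "rho_r > 0" "rho_d > 0" "rho_s > 0" "Km \<ge> 1"
    using assms by (simp_all add: Km_def)
  have "c > 0" and psi_c: "psi (c * ln 2) = (1 + rho_d / rho_r) * sqrt (Km * rho_r / alpha)"
    using cTheta_pos_psi[of alpha rho_r rho_d rho_0 T] pos by (simp_all add: c_def Km_def)
  have "R2 * ln 2 / Km < c * ln 2"
    using assms(10) pos by (simp add: Rmax_def c_def Km_def field_simps)
  then have psi_R2: "psi (R2 * ln 2 / Km) \<le> (1 + rho_d / rho_r) * sqrt (Km * rho_r / alpha)"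
    unfolding psi_c[symmetric] using assms pos \<open>c > 0\<close>
    by (intro less_imp_le strict_mono_onD[OF psi_strict_mono_on]) auto
  obtain K1 where "1 \<le> K1" "K1 \<le> Km"
    and zeta1: "zeta'_csi R1 alpha rho_r rho_d rho_s rho_0 T = zeta_opt K1 R1 alpha rho_r rho_d rho_s"
    using zeta'_csi_attained[OF pos(1-4) assms(8) pos(5)[unfolded Km_def], folded Km_def] by blast
  then obtain K2 where "1 \<le> K2" "K2 \<le> Km"
    and "zeta_opt K1 R1 alpha rho_r rho_d rho_s < zeta_opt K2 R2 alpha rho_r rho_d rho_s"
    using exists_zeta_opt_gt[OF pos(1-4) _ _ assms(8,9) psi_R2] by blast
  moreover obtain K0
    where "zeta'_csi R2 alpha rho_r rho_d rho_s rho_0 T = zeta_opt K0 R2 alpha rho_r rho_d rho_s"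
      and "\<And>K. 1 \<le> K \<Longrightarrow> K \<le> Km \<Longrightarrow> zeta_opt K R2 alpha rho_r rho_d rho_s \<le> zeta_opt K0 R2 alpha rho_r rho_d rho_s"
    using zeta'_csi_attained[OF pos(1-4) _ pos(5)[unfolded Km_def], of R2, folded Km_def] assms by auto
  ultimately show ?thesis
    using zeta1 by fastforce
qed

end
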